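(* Let $n \ge r \ge r^* \ge 1$ be integers, let $A_1,\dots,A_m \in \mathbb{R}^{n\times n}$ be symmetric matrices, and define the linear map $\mathcal{A}:\mathbb{R}^{n\times n}\to\mathbb{R}^m$ by $\mathcal{A}(M) = (\langle A_1,M\rangle,\dots,\langle A_m,M\rangle)^\top$, where $\langle A,B\rangle=\operatorname{tr}(A^\top B)$. Let $M^*\in\mathbb{R}^{n\times n}$ be a nonzero symmetric positive semidefinite matrix of rank $r^*$, let $b=\mathcal{A}(M^* )$, and consider \[ f(X) = \tfrac12\|\mathcal{A}(XX^\top)-b\|_2^2,\qquad X\in\mathbb{R}^{n\times r}. \] Assume $\mathcal{A}$ satisfies the RIP$_{r+r^*}$ property with constant $\delta\in[0,1)$. Let $\hat X\in\mathbb{R}^{n\times r}$ be a first-order critical point of $f$, i.e. $\nabla f(\hat X)=0$. If \[ \|\hat X\hat X^\top - M^*\|_F^2 > 2\,\frac{1+\delta}{1-\delta}\,\operatorname{tr}(M^* )\,\sigma_r(\hat X)^2, \] then $\hat X$ is not a second-order critical point of $f$; it is a strict saddle point, and the Hessian $\nabla^2 f(\hat X)$ has a strictly negative eigenvalue not larger than \[ 2(1+\delta)\sigma_r(\hat X)^2 - \frac{(1-\delta)\,\|\hat X\hat X^\top - M^*\|_F^2}{\operatorname{tr}(M^* )}. \]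
   Context: RIP: for a natural number $p$, $\mathcal{A}$ satisfies $\delta_p$-RIP (RIP$_p$ with constant $\delta$) if $(1-\delta)\|M\|_F^2 \le \|\mathcal{A}(M)\|_2^2 \le (1+\delta)\|M\|_F^2$ for all $M\in\mathbb{R}^{n\times n}$ with $\operatorname{rank}(M)\le p$. $\sigma_r(\hat X)$ denotes the $r$-th largest singular value of $\hat X$. The Hessian $\nabla^2 f(X)$ is regarded as the symmetric quadratic form $U\mapsto \nabla^2 f(X)[U,U]=\sum \frac{\partial^2 f}{\partial X_{ij}\partial X_{kl}}(X)U_{ij}U_{kl}$ on $\mathbb{R}^{n\times r}$ (with the Frobenius inner product), and its eigenvalues are those of this form. A second-order critical point is a point with zero gradient and positive semidefinite Hessian; a strict saddle is a first-order critical point whose Hessian has a strictly negative eigenvalue. *)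

theory Defs
  imports "HOL-Analysis.Analysis"
begin

text \<open>Matrices are HOL-Analysis matrices: an n x r matrix is real^'r^'n
  (rows indexed by 'n, columns by 'r); dimensions are CARD of the index types.\<close>

definition frob_inner :: "real^'c^'b \<Rightarrow> real^'c^'b \<Rightarrow> real" where
  "frob_inner A B = trace (transpose A ** B)"

definition frob_norm :: "real^'c^'b \<Rightarrow> real" where
  "frob_norm M = sqrt (\<Sum>i\<in>UNIV. \<Sum>j\<in>UNIV. (M $ i $ j)\<^sup>2)"

definition meas :: "('m \<Rightarrow> real^'n^'n) \<Rightarrow> real^'n^'n \<Rightarrow> real^'m" where
  "meas A M = (\<chi> k. frob_inner (A k) M)"

definition RIP :: "('m::finite \<Rightarrow> real^'n^'n) \<Rightarrow> nat \<Rightarrow> real \<Rightarrow> bool" where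
  "RIP A p \<delta> \<longleftrightarrow> (\<forall>M::real^'n^'n. rank M \<le> p \<longrightarrow>
      (1 - \<delta>) * (frob_norm M)\<^sup>2 \<le> (norm (meas A M))\<^sup>2 \<and>
      (norm (meas A M))\<^sup>2 \<le> (1 + \<delta>) * (frob_norm M)\<^sup>2)"

definition psd :: "real^'n^'n \<Rightarrow> bool" where
  "psd M \<longleftrightarrow> transpose M = M \<and> (\<forall>x. 0 \<le> x \<bullet> (M *v x))"

definition mat_eigenvalue :: "real^'n^'n \<Rightarrow> real \<Rightarrow> bool" where
  "mat_eigenvalue M l \<longleftrightarrow> (\<exists>v. v \<noteq> 0 \<and> M *v v = l *\<^sub>R v)"

text \<open>The r-th largest singular value of an n x r matrix X (r = number of columns):
  the singular values of X are the square roots of the eigenvalues of X^T X,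
  and since X has exactly r of them the r-th largest is the smallest.\<close>
definition sigma_r :: "real^'r^'n \<Rightarrow> real" where
  "sigma_r X = sqrt (Min {l. mat_eigenvalue (transpose X ** X) l})"

definition emat :: "'n \<Rightarrow> 'r \<Rightarrow> real^'r^'n" where
  "emat i j = (\<chi> a b. if a = i \<and> b = j then 1 else 0)"

definition grad :: "(real^'r^'n \<Rightarrow> real) \<Rightarrow> real^'r^'n \<Rightarrow> real^'r^'n" where
  "grad f X = (\<chi> i j. deriv (\<lambda>t. f (X + t *\<^sub>R emat i j)) 0)"

definition d2 :: "(real^'r^'n \<Rightarrow> real) \<Rightarrow> real^'r^'n \<Rightarrow> 'n \<Rightarrow> 'r \<Rightarrow> 'n \<Rightarrow> 'r \<Rightarrow> real" where
  "d2 f X i j k l = deriv (\<lambda>s. deriv (\<lambda>t. f (X + t *\<^sub>R emat k l + s *\<^sub>R emat i j)) 0) 0"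

definition hess_form :: "(real^'r^'n \<Rightarrow> real) \<Rightarrow> real^'r^'n \<Rightarrow> real^'r^'n \<Rightarrow> real" where
  "hess_form f X U = (\<Sum>i\<in>UNIV. \<Sum>j\<in>UNIV. \<Sum>k\<in>UNIV. \<Sum>l\<in>UNIV.
       d2 f X i j k l * U $ i $ j * U $ k $ l)"

definition hess_op :: "(real^'r^'n \<Rightarrow> real) \<Rightarrow> real^'r^'n \<Rightarrow> real^'r^'n \<Rightarrow> real^'r^'n" where
  "hess_op f X U = (\<chi> i j. \<Sum>k\<in>UNIV. \<Sum>l\<in>UNIV. d2 f X i j k l * U $ k $ l)"

definition hess_eigenvalue :: "(real^'r^'n \<Rightarrow> real) \<Rightarrow> real^'r^'n \<Rightarrow> real \<Rightarrow> bool" where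
  "hess_eigenvalue f X l \<longleftrightarrow> (\<exists>U. U \<noteq> 0 \<and> hess_op f X U = l *\<^sub>R U)"

definition first_order_critical :: "(real^'r^'n \<Rightarrow> real) \<Rightarrow> real^'r^'n \<Rightarrow> bool" where
  "first_order_critical f X \<longleftrightarrow> grad f X = 0"

definition second_order_critical :: "(real^'r^'n \<Rightarrow> real) \<Rightarrow> real^'r^'n \<Rightarrow> bool" where
  "second_order_critical f X \<longleftrightarrow> grad f X = 0 \<and> (\<forall>U. 0 \<le> hess_form f X U)"

definition strict_saddle :: "(real^'r^'n \<Rightarrow> real) \<Rightarrow> real^'r^'n \<Rightarrow> bool" where
  "strict_saddle f X \<longleftrightarrow> first_order_critical f X \<and> (\<exists>l. hess_eigenvalue f X l \<and> l < 0)"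

end

theory Submission
  imports Defs
begin

(* At a critical point X the residual R = A(X X^T - Mstar) is orthogonal to every
   A(X V^T + V X^T); taking V = X gives <R, A Mstar> = -|R|^2 <= -(1 - delta) |X X^T - Mstar|_F^2
   by RIP.  Writing the psd matrix Mstar as a sum of rank-one terms w w^T, whose squared norms
   add up to tr Mstar, some w has <R, A(w w^T)> <= -kappa |w|^2 with
   kappa = (1 - delta) |X X^T - Mstar|_F^2 / tr Mstar.  Along U = w q^T, where q is a unit
   vector with |X q| = sigma_r(X), the Hessian form equals |A(X U^T + U X^T)|^2 + 2 <R, A(w w^T)>,
   and RIP bounds the first term by 4 (1 + delta) sigma_r(X)^2 |w|^2.  So the Rayleigh quotient,
   hence the least Hessian eigenvalue, is at most 2 (2 (1 + delta) sigma_r(X)^2 - kappa), which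
   the gap hypothesis makes negative. *)

section \<open>Frobenius geometry and rank-one matrices\<close>

lemma frob_inner_eq_inner: "frob_inner A B = A \<bullet> B"
  unfolding frob_inner_def trace_def matrix_matrix_mult_def transpose_def inner_vec_def
  by (simp add: mult.commute) (rule sum.swap)

lemma frob_norm_eq_norm: "frob_norm M = norm M"
  unfolding frob_norm_def norm_vec_def L2_set_def
  by (intro arg_cong[where f = sqrt] sum.cong) (simp_all add: real_norm_def sum_nonneg)

lemma meas_eq_inner: "meas A M = (\<chi> k. A k \<bullet> M)"
  by (simp add: meas_def frob_inner_eq_inner)

lemma meas_add: "meas A (M + N) = meas A M + meas A N"
  and meas_diff: "meas A (M - N) = meas A M - meas A N"
  and meas_scaleR: "meas A (c *\<^sub>R M) = c *\<^sub>R meas A M"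
  by (simp_all add: meas_eq_inner vec_eq_iff inner_add_right inner_diff_right)

lemma transpose_add: "transpose (A + B) = transpose A + transpose (B::real^'c^'b)"
  by (simp add: transpose_def vec_eq_iff)

lemma matrix_add_rdistrib: "(A + B) ** C = A ** C + B ** (C::real^'c^'b)"
  by (vector matrix_matrix_mult_def sum.distrib[symmetric] field_simps)

lemma trace_scaleR: "trace (c *\<^sub>R M) = c * trace (M::real^'n^'n)"
  by (simp add: trace_def sum_distrib_left)

definition outer :: "real^'a \<Rightarrow> real^'b \<Rightarrow> real^'b^'a" where
  "outer v w = (\<chi> i j. v $ i * w $ j)"

lemma outer_zero [simp]: "outer 0 w = 0" "outer v 0 = 0"
  by (simp_all add: outer_def vec_eq_iff)

lemma outer_mult_vec: "outer v w *v x = (w \<bullet> x) *\<^sub>R v"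
  by (simp add: outer_def matrix_vector_mult_def inner_vec_def vec_eq_iff sum_distrib_left mult_ac)

lemma norm_outer: "norm (outer v w) = norm v * norm w"
proof -
  have "(norm (outer v w))\<^sup>2 = (norm v * norm w)\<^sup>2"
    unfolding power2_norm_eq_inner power_mult_distrib
    by (simp add: outer_def inner_vec_def sum_product, intro sum.cong refl) (simp add: algebra_simps)
  then show ?thesis by (simp add: power2_eq_iff_nonneg)
qed

lemma trace_outer: "trace (outer v v) = v \<bullet> v"
  by (simp add: trace_def outer_def inner_vec_def)

lemma matrix_mult_transpose_outer: "(X::real^'r^'n) ** transpose (outer w q) = outer (X *v q) w"
  and outer_mult_transpose: "outer w q ** transpose (X::real^'r^'n) = outer w (X *v q)"
  and outer_mult_transpose_outer: "outer w q ** transpose (outer w q) = (q \<bullet> q) *\<^sub>R outer w w"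
  by (simp_all add: matrix_matrix_mult_def transpose_def outer_def matrix_vector_mult_def
      inner_vec_def vec_eq_iff sum_distrib_left mult_ac)

lemma rank_outer_add_outer: "rank (outer p w + outer w p) \<le> 2"
proof -
  have "range ((*v) (outer p w + outer w p)) \<subseteq> span {p, w}"
    by (auto simp: matrix_vector_mult_add_rdistrib outer_mult_vec span_add span_mul span_base)
  then have "rank (outer p w + outer w p) \<le> card {p, w}"
    unfolding rank_dim_range by (intro dim_le_card) auto
  also have "\<dots> \<le> 2" by (simp add: card_insert_le_m1)
  finally show ?thesis .
qed

lemma rank_diff_le:
  fixes A B :: "real^'n^'m"
  shows "rank (A - B) \<le> rank A + rank B"
proof -
  let ?S = "range ((*v) A)" and ?T = "range ((*v) B)"
  have sub: "subspace ?S" "subspace ?T"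
    by (simp_all add: linear_subspace_image matrix_vector_mul_linear)
  have "(A - B) *v x = A *v x + B *v (- x)" for x
    by (simp add: matrix_vector_mult_diff_rdistrib linear_neg[OF matrix_vector_mul_linear])
  then have "range ((*v) (A - B)) \<subseteq> {x + y |x y. x \<in> ?S \<and> y \<in> ?T}"
    by blast
  then have "rank (A - B) \<le> dim {x + y |x y. x \<in> ?S \<and> y \<in> ?T}"
    unfolding rank_dim_range by (rule dim_subset)
  also have "\<dots> \<le> dim ?S + dim ?T"
    using dim_sums_Int[OF sub] by linarith
  finally show ?thesis by (simp add: rank_dim_range)
qed

lemma rank_gram_diff_le:
  fixes X :: "real^'r^'n" and M :: "real^'n^'n"
  shows "rank (X ** transpose X - M) \<le> CARD('r) + rank M"
proof -
  have "rank (X ** transpose X) \<le> CARD('r)"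
    using rank_mul_le_left[of X "transpose X"] rank_bound[of X] by linarith
  then show ?thesis
    using rank_diff_le[of "X ** transpose X" M] by linarith
qed

section \<open>Rayleigh quotients of self-adjoint maps\<close>

lemma quadratic_nonneg_discriminant:
  fixes p b c :: real
  assumes c: "0 \<le> c" and nonneg: "\<And>t. 0 \<le> p + 2 * t * b + t\<^sup>2 * c"
  shows "b\<^sup>2 \<le> p * c"
proof (cases "c = 0")
  case True
  show ?thesis
  proof (cases "b = 0")
    case False
    define t where "t = - (\<bar>p\<bar> + 1) / (2 * b)"
    have "2 * t * b = - (\<bar>p\<bar> + 1)" using False by (simp add: t_def)
    then show ?thesis using nonneg[of t] True abs_ge_self[of p] by simp
  qed (simp add: True)
next
  case False
  then have "c > 0" using c by simp
  have "0 \<le> p + 2 * (- b / c) * b + (- b / c)\<^sup>2 * c" by (rule nonneg)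
  also have "\<dots> = p - b\<^sup>2 / c" using \<open>c > 0\<close> by (simp add: power2_eq_square field_simps)
  finally show ?thesis using \<open>c > 0\<close> by (simp add: field_simps)
qed

lemma self_adjoint_min_eigenvector:
  fixes T :: "'a::euclidean_space \<Rightarrow> 'a"
  assumes lin: "linear T" and self_adjoint: "\<And>x y. T x \<bullet> y = x \<bullet> T y"
  shows "\<exists>v \<mu>. norm v = 1 \<and> T v = \<mu> *\<^sub>R v \<and> (\<forall>x. \<mu> * (norm x)\<^sup>2 \<le> x \<bullet> T x)"
proof -
  have "continuous_on (sphere 0 1) (\<lambda>x. x \<bullet> T x)"
    using lin by (intro continuous_intros linear_continuous_on) (simp add: linear_conv_bounded_linear)
  moreover have "sphere (0::'a) 1 \<noteq> {}"
    using nonempty_Basis by (auto simp: norm_Basis)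
  ultimately obtain v where "v \<in> sphere 0 1" and v_min: "\<forall>y \<in> sphere 0 1. v \<bullet> T v \<le> y \<bullet> T y"
    using continuous_attains_inf[OF compact_sphere] by blast
  then have v: "norm v = 1" by simp
  define \<mu> where "\<mu> = v \<bullet> T v"
  have rayleigh: "\<mu> * (norm x)\<^sup>2 \<le> x \<bullet> T x" for x
  proof (cases "x = 0")
    case True
    then show ?thesis using linear_0[OF lin] by simp
  next
    case False
    have "\<mu> \<le> (x /\<^sub>R norm x) \<bullet> T (x /\<^sub>R norm x)"
      unfolding \<mu>_def using False by (intro v_min[rule_format]) simp
    also have "\<dots> = (x \<bullet> T x) / (norm x)\<^sup>2"
      by (simp add: linear_scale[OF lin] power2_eq_square divide_inverse)
    finally show ?thesis using False by (simp add: pos_le_divide_eq mult.commute)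
  qed
  \<comment> \<open>The form \<open>x \<mapsto> x \<bullet> T x - \<mu> |x|\<^sup>2\<close> is nonnegative and vanishes at v, so
    \<open>T v - \<mu> v\<close> vanishes by the Cauchy-Schwarz inequality for this form.\<close>
  define w where "w = T v - \<mu> *\<^sub>R v"
  have "0 \<le> 0 + 2 * t * (w \<bullet> w) + t\<^sup>2 * (w \<bullet> T w - \<mu> * (w \<bullet> w))" for t
  proof -
    have "(v + t *\<^sub>R w) \<bullet> T (v + t *\<^sub>R w) = \<mu> + 2 * t * (w \<bullet> T v) + t\<^sup>2 * (w \<bullet> T w)"
      using self_adjoint[of v w] unfolding \<mu>_def
      by (simp add: linear_add[OF lin] linear_scale[OF lin] inner_add_left inner_add_right
          inner_commute power2_eq_square algebra_simps)
    moreover have "(norm (v + t *\<^sub>R w))\<^sup>2 = 1 + 2 * t * (v \<bullet> w) + t\<^sup>2 * (w \<bullet> w)"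
      using v unfolding power2_norm_eq_inner norm_eq_1
      by (simp add: inner_add_left inner_add_right inner_commute power2_eq_square algebra_simps)
    moreover have "w \<bullet> T v - \<mu> * (v \<bullet> w) = w \<bullet> w"
      unfolding w_def by (simp add: inner_diff_left inner_diff_right inner_commute algebra_simps)
    ultimately show ?thesis using rayleigh[of "v + t *\<^sub>R w"] by (simp add: algebra_simps)
  qed
  moreover have "0 \<le> w \<bullet> T w - \<mu> * (w \<bullet> w)"
    using rayleigh[of w] by (simp add: power2_norm_eq_inner)
  ultimately have "(w \<bullet> w)\<^sup>2 \<le> 0"
    using quadratic_nonneg_discriminant[of "w \<bullet> T w - \<mu> * (w \<bullet> w)" 0 "w \<bullet> w"] by simp
  then have "T v = \<mu> *\<^sub>R v" unfolding w_def by simp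
  then show ?thesis using v rayleigh by blast
qed

section \<open>Positive semidefinite matrices\<close>

lemma inner_matrix_vector_symmetric:
  fixes Q :: "real^'n^'n"
  assumes "transpose Q = Q"
  shows "y \<bullet> (Q *v z) = z \<bullet> (Q *v y)"
proof -
  have "y \<bullet> (Q *v z) = (y v* Q) \<bullet> z" by (rule dot_lmul_matrix[symmetric])
  also have "y v* Q = transpose Q *v y" by simp
  finally show ?thesis using assms by (simp add: inner_commute)
qed

lemma psd_symmetric: "psd Q \<Longrightarrow> Q $ i $ j = Q $ j $ i"
  unfolding psd_def by (metis transpose_def vec_lambda_beta)

lemma axis_inner: "axis i 1 \<bullet> y = y $ i"
  by (simp add: inner_axis')

lemma axis_inner_matrix_axis: "axis i 1 \<bullet> (Q *v axis j 1) = Q $ i $ j"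
  by (simp add: axis_inner matrix_vector_mult_basis column_def)

lemma psd_cauchy_schwarz:
  fixes Q :: "real^'n^'n"
  assumes "psd Q"
  shows "(z \<bullet> (Q *v y))\<^sup>2 \<le> (y \<bullet> (Q *v y)) * (z \<bullet> (Q *v z))"
proof (rule quadratic_nonneg_discriminant)
  show "0 \<le> z \<bullet> (Q *v z)" using assms by (simp add: psd_def)
  have sym: "y \<bullet> (Q *v z) = z \<bullet> (Q *v y)"
    using assms by (simp add: psd_def inner_matrix_vector_symmetric)
  fix t
  have "0 \<le> (y + t *\<^sub>R z) \<bullet> (Q *v (y + t *\<^sub>R z))" using assms by (simp add: psd_def)
  then show "0 \<le> y \<bullet> (Q *v y) + 2 * t * (z \<bullet> (Q *v y)) + t\<^sup>2 * (z \<bullet> (Q *v z))"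
    using sym by (simp add: matrix_vector_mult_scaleR matrix_vector_right_distrib inner_add_left
        inner_add_right power2_eq_square algebra_simps)
qed

lemma psd_diag_nonneg:
  assumes "psd Q"
  shows "0 \<le> Q $ a $ a"
proof -
  have "0 \<le> axis a 1 \<bullet> (Q *v axis a 1)" using assms by (simp add: psd_def)
  then show ?thesis by (simp only: axis_inner_matrix_axis)
qed

lemma psd_row_eq_0_if_diag_eq_0:
  assumes "psd Q" "Q $ a $ a = 0"
  shows "Q $ a = 0"
proof -
  have "(Q $ a $ j)\<^sup>2 \<le> Q $ j $ j * Q $ a $ a" for j
    using psd_cauchy_schwarz[OF assms(1), of "axis a 1" "axis j 1"]
    by (simp only: axis_inner_matrix_axis)
  then show ?thesis using assms(2) by (simp add: vec_eq_iff)
qed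

text \<open>One elimination step of a Cholesky factorization.\<close>
lemma psd_diff_outer_row:
  fixes Q :: "real^'n^'n"
  assumes psd: "psd Q" and pos: "0 < Q $ a $ a"
  defines "c \<equiv> (1 / sqrt (Q $ a $ a)) *\<^sub>R Q $ a"
  shows "psd (Q - outer c c)" and "(Q - outer c c) $ a = 0"
proof -
  have cc: "outer c c $ i $ j = Q $ a $ i * Q $ a $ j / Q $ a $ a" for i j
    using pos by (simp add: c_def outer_def real_sqrt_mult[symmetric] field_simps)
  show "(Q - outer c c) $ a = 0"
    using pos by (simp add: vec_eq_iff cc)
  have "transpose (Q - outer c c) = Q - outer c c"
    using psd_symmetric[OF psd] by (simp add: transpose_def outer_def vec_eq_iff mult.commute)
  moreover have "0 \<le> x \<bullet> ((Q - outer c c) *v x)" for x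
  proof -
    have "(c \<bullet> x)\<^sup>2 = ((Q *v x) $ a)\<^sup>2 / Q $ a $ a"
      using pos by (simp add: c_def matrix_vector_mul_component power_divide)
    also have "\<dots> \<le> x \<bullet> (Q *v x)"
      using psd_cauchy_schwarz[OF psd, of "axis a 1" x] pos
      by (simp only: axis_inner_matrix_axis, simp only: axis_inner) (simp add: divide_le_eq mult.commute)
    finally show ?thesis
      by (simp add: matrix_vector_mult_diff_rdistrib outer_mult_vec inner_diff_right
          power2_eq_square inner_commute)
  qed
  ultimately show "psd (Q - outer c c)" by (simp add: psd_def)
qed

lemma psd_sum_outer_rows:
  fixes Q :: "real^'n^'n"
  assumes "finite S" "psd Q" "\<And>i. i \<notin> S \<Longrightarrow> Q $ i = 0"
  shows "\<exists>(N::nat) v. Q = (\<Sum>k<N. outer (v k) (v k))"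
  using assms
proof (induction S arbitrary: Q rule: finite_induct)
  case empty
  then have "Q = 0" by (simp add: vec_eq_iff)
  then show ?case by (intro exI[of _ "0::nat"]) simp
next
  case (insert a S)
  show ?case
  proof (cases "Q $ a $ a = 0")
    case True
    have "Q $ i = 0" if "i \<notin> S" for i
      using insert.prems psd_row_eq_0_if_diag_eq_0[OF insert.prems(1) True] that
      by (cases "i = a") auto
    then show ?thesis using insert.IH insert.prems(1) by blast
  next
    case False
    then have pos: "0 < Q $ a $ a" using psd_diag_nonneg[OF insert.prems(1), of a] by simp
    define c where "c = (1 / sqrt (Q $ a $ a)) *\<^sub>R Q $ a"
    have "(Q - outer c c) $ i = 0" if "i \<notin> S" for i
    proof (cases "i = a")
      case False
      then have "Q $ i = 0" "Q $ a $ i = 0"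
        using insert.prems(2) that psd_symmetric[OF insert.prems(1), of a i] by (auto simp: vec_eq_iff)
      then show ?thesis by (simp add: c_def outer_def vec_eq_iff)
    qed (use psd_diff_outer_row[OF insert.prems(1) pos] c_def in simp)
    then obtain N :: nat and v where "Q - outer c c = (\<Sum>k<N. outer (v k) (v k))"
      using insert.IH psd_diff_outer_row[OF insert.prems(1) pos] c_def by blast
    then have "Q = (\<Sum>k<Suc N. outer ((v(N := c)) k) ((v(N := c)) k))"
      by (simp add: algebra_simps)
    then show ?thesis by blast
  qed
qed

lemma psd_sum_outer:
  fixes Q :: "real^'n^'n"
  assumes "psd Q"
  shows "\<exists>(N::nat) v. Q = (\<Sum>k<N. outer (v k) (v k))"
  using psd_sum_outer_rows[of UNIV] assms by simp

lemma psd_outer_witness: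
  fixes h :: "real^'n^'n \<Rightarrow> real"
  assumes "psd Q" "Q \<noteq> 0" "linear h" "h Q \<le> 0"
  shows "\<exists>w. w \<noteq> 0 \<and> h (outer w w) \<le> 0"
proof (rule ccontr)
  assume pos: "\<not> ?thesis"
  obtain N :: nat and v where Q: "Q = (\<Sum>k<N. outer (v k) (v k))"
    using psd_sum_outer[OF assms(1)] by blast
  have "\<exists>k<N. v k \<noteq> 0"
  proof (rule ccontr)
    assume "\<not> ?thesis"
    then have "Q = 0" unfolding Q by simp
    then show False using assms(2) by contradiction
  qed
  then obtain k where k: "k < N" "v k \<noteq> 0" by blast
  have "0 \<le> h (outer (v j) (v j))" for j
  proof (cases "v j = 0")
    case True
    then show ?thesis using linear_0[OF assms(3)] by simp
  next
    case False
    then show ?thesis using pos by auto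
  qed
  moreover have "0 < h (outer (v k) (v k))" using pos k(2) by auto
  ultimately have "0 < (\<Sum>k<N. h (outer (v k) (v k)))"
    using k(1) by (intro sum_pos2[OF finite_lessThan, of k]) auto
  also have "\<dots> = h Q" by (simp add: Q linear_sum[OF assms(3)])
  finally show False using assms(4) by simp
qed

lemma psd_trace_pos:
  fixes Q :: "real^'n^'n"
  assumes "psd Q" "Q \<noteq> 0"
  shows "0 < trace Q"
proof (rule ccontr)
  assume "\<not> 0 < trace Q"
  then have nonpos: "trace Q \<le> 0" by simp
  have lin: "linear (trace :: real^'n^'n \<Rightarrow> real)"
    by (rule linearI) (simp_all add: trace_add trace_scaleR)
  obtain w :: "real^'n" where "w \<noteq> 0" "trace (outer w w) \<le> 0"
    using psd_outer_witness[OF assms lin nonpos] by blast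
  then have "0 < w \<bullet> w" "w \<bullet> w \<le> 0" by (simp_all add: trace_outer)
  then show False by linarith
qed

section \<open>The smallest singular value\<close>

lemma finite_eigenvalues_symmetric:
  fixes M :: "real^'n^'n"
  assumes sym: "transpose M = M"
  shows "finite {l. mat_eigenvalue M l}"
proof -
  define L where "L = {l. mat_eigenvalue M l}"
  define ev where "ev l = (SOME v. v \<noteq> 0 \<and> M *v v = l *\<^sub>R v)" for l
  have ev: "ev l \<noteq> 0 \<and> M *v ev l = l *\<^sub>R ev l" if "l \<in> L" for l
  proof -
    have "\<exists>v. v \<noteq> 0 \<and> M *v v = l *\<^sub>R v" using that by (simp add: L_def mat_eigenvalue_def)
    then show ?thesis unfolding ev_def by (rule someI_ex)
  qed
  have "inj_on ev L"
  proof (rule inj_onI)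
    fix l1 l2 assume "l1 \<in> L" "l2 \<in> L" "ev l1 = ev l2"
    then have "l1 *\<^sub>R ev l1 = l2 *\<^sub>R ev l1" "ev l1 \<noteq> 0" using ev by metis+
    then show "l1 = l2" by simp
  qed
  moreover have "pairwise orthogonal (ev ` L)"
  proof (clarsimp simp: pairwise_def orthogonal_def)
    fix l1 l2 assume l: "l1 \<in> L" "l2 \<in> L" "ev l1 \<noteq> ev l2"
    then have "l1 \<noteq> l2" by auto
    have "l1 * (ev l1 \<bullet> ev l2) = ev l2 \<bullet> (M *v ev l1)" using ev[OF l(1)] by (simp add: inner_commute)
    also have "\<dots> = ev l1 \<bullet> (M *v ev l2)" by (rule inner_matrix_vector_symmetric[OF sym])
    also have "\<dots> = l2 * (ev l1 \<bullet> ev l2)" using ev[OF l(2)] by simp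
    finally show "ev l1 \<bullet> ev l2 = 0" using \<open>l1 \<noteq> l2\<close> by simp
  qed
  moreover have "0 \<notin> ev ` L" using ev by auto
  ultimately have "finite (ev ` L)"
    using finiteI_independent pairwise_orthogonal_independent by blast
  then show ?thesis using \<open>inj_on ev L\<close> finite_imageD unfolding L_def by blast
qed

lemma sigma_r_attained:
  fixes X :: "real^'r^'n"
  obtains q where "norm q = 1" "(norm (X *v q))\<^sup>2 = (sigma_r X)\<^sup>2"
proof -
  define M where "M = transpose X ** X"
  define L where "L = {l. mat_eigenvalue M l}"
  have sym: "transpose M = M" unfolding M_def by (simp add: matrix_transpose_mul)
  obtain v \<mu> where "norm v = 1" "M *v v = \<mu> *\<^sub>R v"
    using self_adjoint_min_eigenvector[OF matrix_vector_mul_linear, of M]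
      inner_matrix_vector_symmetric[OF sym] by (metis inner_commute)
  then have "\<mu> \<in> L" unfolding L_def mat_eigenvalue_def by (intro CollectI exI[of _ v]) auto
  then have "Min L \<in> L"
    using finite_eigenvalues_symmetric[OF sym] unfolding L_def by (intro Min_in) auto
  then obtain q0 where q0: "q0 \<noteq> 0" "M *v q0 = Min L *\<^sub>R q0"
    unfolding L_def mat_eigenvalue_def by auto
  define q where "q = q0 /\<^sub>R norm q0"
  have q: "norm q = 1" "M *v q = Min L *\<^sub>R q"
    using q0 by (simp_all add: q_def matrix_vector_mult_scaleR)
  have "(norm (X *v q))\<^sup>2 = q \<bullet> (M *v q)"
    by (simp add: M_def power2_norm_eq_inner dot_lmul_matrix[symmetric] matrix_vector_mul_assoc[symmetric]
        inner_commute)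
  also have "\<dots> = Min L" using q by (simp add: power2_norm_eq_inner[symmetric])
  finally have "(norm (X *v q))\<^sup>2 = Min L" .
  moreover from this have "(sigma_r X)\<^sup>2 = Min L"
    unfolding sigma_r_def M_def[symmetric] L_def[symmetric] by (metis real_sqrt_pow2 zero_le_power2)
  ultimately show ?thesis using that q(1) by simp
qed

section \<open>Hessians given by a bilinear form\<close>

lemma matrix_eq_sum_emat: "V = (\<Sum>i\<in>UNIV. \<Sum>j\<in>UNIV. V $ i $ j *\<^sub>R emat i j)"
proof -
  have "(\<Sum>j\<in>UNIV. V $ i $ j * (if a = i \<and> b = j then 1 else 0)) = (if a = i then V $ i $ b else 0)"
    for i a b
    by (cases "a = i") (simp_all add: if_distrib cong: if_cong)
  then show ?thesis by (simp add: vec_eq_iff emat_def sum_component)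
qed

lemma linear_eq_sum_emat:
  fixes g :: "real^'r^'n \<Rightarrow> 'b::real_vector"
  assumes "linear g"
  shows "g V = (\<Sum>i\<in>UNIV. \<Sum>j\<in>UNIV. V $ i $ j *\<^sub>R g (emat i j))"
  by (subst matrix_eq_sum_emat) (simp add: linear_sum[OF assms] linear_scale[OF assms])

lemma hess_form_eq_inner_hess_op: "hess_form f X U = U \<bullet> hess_op f X U"
  by (simp add: hess_form_def hess_op_def inner_vec_def sum_distrib_left mult_ac)

lemma inner_hess_op_bilinear:
  assumes B: "bilinear B" and d2: "\<And>i j k l. d2 f X i j k l = B (emat i j) (emat k l)"
  shows "V \<bullet> hess_op f X U = B V U"
proof -
  have lin1: "linear (\<lambda>V. B V U)" and lin2: "linear (B V)" for V U
    using B by (simp_all add: bilinear_def)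
  have "hess_op f X U = (\<chi> i j. B (emat i j) U)"
    by (simp add: hess_op_def d2 vec_eq_iff linear_eq_sum_emat[OF lin2, of _ U] mult.commute)
  then show ?thesis
    by (simp add: inner_vec_def linear_eq_sum_emat[OF lin1, of V])
qed

lemma hess_min_eigenvalue_bilinear:
  assumes B: "bilinear B" and B_commute: "\<And>V W. B V W = B W V"
    and d2: "\<And>i j k l. d2 f X i j k l = B (emat i j) (emat k l)"
  shows "\<exists>\<mu>. hess_eigenvalue f X \<mu> \<and> (\<forall>U. \<mu> * (norm U)\<^sup>2 \<le> B U U)"
proof -
  have "linear (hess_op f X)"
    by (rule linearI) (simp_all add: hess_op_def vec_eq_iff sum.distrib sum_distrib_left algebra_simps)
  moreover have "hess_op f X U \<bullet> V = U \<bullet> hess_op f X V" for U V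
    using inner_hess_op_bilinear[OF B d2] B_commute by (simp add: inner_commute)
  ultimately obtain V \<mu> where "norm V = 1" "hess_op f X V = \<mu> *\<^sub>R V"
      and "\<forall>U. \<mu> * (norm U)\<^sup>2 \<le> U \<bullet> hess_op f X U"
    using self_adjoint_min_eigenvector by blast
  then show ?thesis
    unfolding hess_eigenvalue_def inner_hess_op_bilinear[OF B d2] by (metis norm_zero zero_neq_one)
qed

lemma not_second_order_critical_if_neg_eigenvalue:
  assumes "hess_eigenvalue f X \<mu>" "\<mu> < 0"
  shows "\<not> second_order_critical f X"
proof -
  obtain U where "U \<noteq> 0" "hess_op f X U = \<mu> *\<^sub>R U"
    using assms(1) unfolding hess_eigenvalue_def by blast
  then have "hess_form f X U < 0"
    using assms(2) by (simp add: hess_form_eq_inner_hess_op mult_neg_pos)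
  then show ?thesis unfolding second_order_critical_def by (metis not_le)
qed

section \<open>Derivatives of the measurement loss\<close>

definition residual :: "('m \<Rightarrow> real^'n^'n) \<Rightarrow> real^'n^'n \<Rightarrow> real^'r^'n \<Rightarrow> real^'m" where
  "residual A M X = meas A (X ** transpose X - M)"

definition sym_meas :: "('m \<Rightarrow> real^'n^'n) \<Rightarrow> real^'r^'n \<Rightarrow> real^'r^'n \<Rightarrow> real^'m" where
  "sym_meas A V W = meas A (V ** transpose W + W ** transpose V)"

definition meas_loss :: "('m::finite \<Rightarrow> real^'n^'n) \<Rightarrow> real^'n^'n \<Rightarrow> real^'r^'n \<Rightarrow> real" where
  "meas_loss A M X = (1/2) * (norm (residual A M X))\<^sup>2"

definition meas_loss_hess ::
    "('m::finite \<Rightarrow> real^'n^'n) \<Rightarrow> real^'n^'n \<Rightarrow> real^'r^'n \<Rightarrow> real^'r^'n \<Rightarrow> real^'r^'n \<Rightarrow> real" where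
  "meas_loss_hess A M X V W = sym_meas A X V \<bullet> sym_meas A X W + residual A M X \<bullet> sym_meas A V W"

lemma sym_meas_commute: "sym_meas A V W = sym_meas A W V"
  by (simp add: sym_meas_def add.commute)

lemma bilinear_sym_meas: "bilinear (sym_meas A)"
proof -
  have lin: "linear (\<lambda>W. sym_meas A V W)" for V
    by (rule linearI) (simp_all add: sym_meas_def transpose_add transpose_scalar matrix_add_ldistrib
        matrix_add_rdistrib matrix_scalar_ac scalar_matrix_assoc[symmetric] meas_add meas_scaleR
        algebra_simps)
  moreover have "linear (\<lambda>V. sym_meas A V W)" for W
    using lin[of W] by (simp add: sym_meas_commute[of A _ W])
  ultimately show ?thesis unfolding bilinear_def by blast
qed

lemma gram_add_scaleR:
  fixes X V :: "real^'r^'n"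
  shows "(X + t *\<^sub>R V) ** transpose (X + t *\<^sub>R V)
    = X ** transpose X + t *\<^sub>R (X ** transpose V + V ** transpose X) + t\<^sup>2 *\<^sub>R (V ** transpose V)"
  by (simp add: transpose_add transpose_scalar matrix_add_ldistrib matrix_add_rdistrib
      matrix_scalar_ac scalar_matrix_assoc[symmetric] power2_eq_square algebra_simps)

lemma residual_add_scaleR:
  "residual A M (X + t *\<^sub>R V)
    = residual A M X + t *\<^sub>R sym_meas A X V + t\<^sup>2 *\<^sub>R meas A (V ** transpose V)"
  unfolding residual_def sym_meas_def gram_add_scaleR
  by (simp add: meas_add meas_diff meas_scaleR algebra_simps)

lemma deriv_quartic_at_0: "deriv (\<lambda>t::real. a + b * t + c * t\<^sup>2 + d * t^3 + e * t^4) 0 = b"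
  by (rule DERIV_imp_deriv) (auto intro!: derivative_eq_intros)

lemma meas_loss_add_scaleR:
  fixes A :: "'m::finite \<Rightarrow> real^'n^'n" and M :: "real^'n^'n" and X V :: "real^'r^'n"
  defines "R \<equiv> residual A M X" and "P \<equiv> sym_meas A X V" and "Q \<equiv> meas A (V ** transpose V)"
  shows "meas_loss A M (X + t *\<^sub>R V) = (1/2) * (R \<bullet> R) + (R \<bullet> P) * t
    + ((1/2) * (P \<bullet> P) + R \<bullet> Q) * t\<^sup>2 + (P \<bullet> Q) * t^3 + ((1/2) * (Q \<bullet> Q)) * t^4"
  unfolding meas_loss_def residual_add_scaleR R_def[symmetric] P_def[symmetric] Q_def[symmetric]
    power2_norm_eq_inner
  by (simp add: inner_add_left inner_add_right inner_commute power2_eq_square power3_eq_cube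
      power4_eq_xxxx algebra_simps)

lemma deriv_meas_loss_line:
  "deriv (\<lambda>t. meas_loss A M (X + t *\<^sub>R V)) 0 = residual A M X \<bullet> sym_meas A X V"
  unfolding meas_loss_add_scaleR by (rule deriv_quartic_at_0)

lemma grad_meas_loss: "grad (meas_loss A M) X $ i $ j = residual A M X \<bullet> sym_meas A X (emat i j)"
  by (simp add: grad_def deriv_meas_loss_line)

lemma d2_meas_loss: "d2 (meas_loss A M) X i j k l = meas_loss_hess A M X (emat i j) (emat k l)"
proof -
  define E F where "E = emat i j" and "F = emat k l"
  define R P Q P' S where "R = residual A M X" and "P = sym_meas A X E"
    and "Q = meas A (E ** transpose E)" and "P' = sym_meas A X F" and "S = sym_meas A E F"
  have "deriv (\<lambda>t. meas_loss A M (X + t *\<^sub>R F + s *\<^sub>R E)) 0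
      = R \<bullet> P' + (R \<bullet> S + P \<bullet> P') * s + (Q \<bullet> P' + P \<bullet> S) * s\<^sup>2 + (Q \<bullet> S) * s^3 + 0 * s^4" for s
  proof -
    have "deriv (\<lambda>t. meas_loss A M (X + t *\<^sub>R F + s *\<^sub>R E)) 0
        = residual A M (X + s *\<^sub>R E) \<bullet> sym_meas A (X + s *\<^sub>R E) F"
      using deriv_meas_loss_line[of A M "X + s *\<^sub>R E" F] by (simp add: algebra_simps)
    also have "\<dots> = (R + s *\<^sub>R P + s\<^sup>2 *\<^sub>R Q) \<bullet> (P' + s *\<^sub>R S)"
      unfolding residual_add_scaleR bilinear_ladd[OF bilinear_sym_meas] bilinear_lmul[OF bilinear_sym_meas]
        R_def P_def Q_def P'_def S_def ..
    finally show ?thesis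
      by (simp add: inner_add_left inner_add_right power2_eq_square power3_eq_cube algebra_simps)
  qed
  then have "d2 (meas_loss A M) X i j k l = R \<bullet> S + P \<bullet> P'"
    unfolding d2_def E_def[symmetric] F_def[symmetric] by (simp only: deriv_quartic_at_0)
  then show ?thesis
    by (simp add: meas_loss_hess_def E_def F_def R_def S_def P_def P'_def)
qed

lemma meas_loss_hess_commute: "meas_loss_hess A M X V W = meas_loss_hess A M X W V"
  by (simp add: meas_loss_hess_def inner_commute sym_meas_commute[of A V W])

lemma bilinear_meas_loss_hess: "bilinear (meas_loss_hess A M X)"
proof -
  have B: "bilinear (sym_meas A)" by (rule bilinear_sym_meas)
  have lin: "linear (\<lambda>W. meas_loss_hess A M X V W)" for V
    by (rule linearI) (simp_all add: meas_loss_hess_def bilinear_radd[OF B] bilinear_rmul[OF B]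
        inner_add_right algebra_simps)
  moreover have "linear (\<lambda>V. meas_loss_hess A M X V W)" for W
    using lin[of W] by (simp add: meas_loss_hess_commute[of A M X _ W])
  ultimately show ?thesis unfolding bilinear_def by blast
qed

lemma critical_residual_orthogonal:
  assumes "grad (meas_loss A M) X = 0"
  shows "residual A M X \<bullet> sym_meas A X V = 0"
proof -
  have "linear (\<lambda>V. residual A M X \<bullet> sym_meas A X V)"
    by (rule linearI) (simp_all add: bilinear_radd[OF bilinear_sym_meas]
        bilinear_rmul[OF bilinear_sym_meas] inner_add_right)
  then show ?thesis
    using assms grad_meas_loss[of A M X] by (subst linear_eq_sum_emat) (simp_all add: vec_eq_iff)
qed

lemma critical_residual_inner_target:
  assumes "grad (meas_loss A M) X = 0"
  shows "residual A M X \<bullet> meas A M = - (norm (residual A M X))\<^sup>2"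
proof -
  have "residual A M X \<bullet> sym_meas A X X = 2 * (residual A M X \<bullet> meas A (X ** transpose X))"
    unfolding sym_meas_def meas_add inner_add_right by simp
  then have "residual A M X \<bullet> meas A (X ** transpose X) = 0"
    using critical_residual_orthogonal[OF assms, of X] by simp
  moreover have "meas A M = meas A (X ** transpose X) - residual A M X"
    by (simp add: residual_def meas_diff)
  ultimately show ?thesis by (simp add: inner_diff_right power2_norm_eq_inner)
qed

lemma meas_loss_hess_outer:
  assumes "norm q = 1"
  shows "meas_loss_hess A M X (outer w q) (outer w q)
    = (norm (meas A (outer (X *v q) w + outer w (X *v q))))\<^sup>2 + 2 * (residual A M X \<bullet> meas A (outer w w))"
proof -
  have "sym_meas A X (outer w q) = meas A (outer (X *v q) w + outer w (X *v q))"
    by (simp only: sym_meas_def matrix_mult_transpose_outer outer_mult_transpose)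
  moreover have "residual A M X \<bullet> sym_meas A (outer w q) (outer w q)
      = 2 * (residual A M X \<bullet> meas A (outer w w))"
    using assms unfolding sym_meas_def outer_mult_transpose_outer meas_add inner_add_right norm_eq_1
    by simp
  ultimately show ?thesis by (simp add: meas_loss_hess_def power2_norm_eq_inner)
qed

section \<open>Negative curvature at critical points\<close>

lemma rip_lower_residual:
  fixes A :: "'m::finite \<Rightarrow> real^'n^'n" and X :: "real^'r^'n"
  assumes "RIP A (CARD('r) + rank M) \<delta>"
  shows "(1 - \<delta>) * (norm (X ** transpose X - M))\<^sup>2 \<le> (norm (residual A M X))\<^sup>2"
  using assms rank_gram_diff_le[of X M] unfolding RIP_def residual_def frob_norm_eq_norm by blast

lemma rip_sym_outer_le:
  assumes "RIP A p \<delta>" "2 \<le> p" "0 \<le> \<delta>"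
  shows "(norm (meas A (outer u w + outer w u)))\<^sup>2 \<le> 4 * (1 + \<delta>) * (norm u)\<^sup>2 * (norm w)\<^sup>2"
proof -
  have "(norm (meas A (outer u w + outer w u)))\<^sup>2 \<le> (1 + \<delta>) * (norm (outer u w + outer w u))\<^sup>2"
    using assms(1,2) rank_outer_add_outer[of u w] unfolding RIP_def frob_norm_eq_norm by auto
  also have "\<dots> \<le> (1 + \<delta>) * (2 * (norm u * norm w))\<^sup>2"
  proof -
    have "norm (outer u w + outer w u) \<le> 2 * (norm u * norm w)"
      using norm_triangle_ineq[of "outer u w" "outer w u"] by (simp add: norm_outer)
    then show ?thesis using assms(3) by (intro mult_left_mono power_mono) auto
  qed
  also have "\<dots> = 4 * (1 + \<delta>) * (norm u)\<^sup>2 * (norm w)\<^sup>2"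
    by (simp add: power_mult_distrib algebra_simps)
  finally show ?thesis .
qed

lemma critical_outer_descent:
  fixes A :: "'m::finite \<Rightarrow> real^'n^'n" and X :: "real^'r^'n"
  assumes rip: "RIP A (CARD('r) + rank M) \<delta>" and psd: "psd M" "M \<noteq> 0"
    and crit: "grad (meas_loss A M) X = 0"
  defines "\<kappa> \<equiv> (1 - \<delta>) * (norm (X ** transpose X - M))\<^sup>2 / trace M"
  shows "\<exists>w. w \<noteq> 0 \<and> residual A M X \<bullet> meas A (outer w w) + \<kappa> * (w \<bullet> w) \<le> 0"
proof -
  let ?h = "\<lambda>N. residual A M X \<bullet> meas A N + \<kappa> * trace N"
  have "linear ?h"
    by (rule linearI) (simp_all add: meas_add meas_scaleR trace_add trace_scaleR inner_add_right
        algebra_simps)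
  moreover have "?h M \<le> 0"
    using critical_residual_inner_target[OF crit] rip_lower_residual[OF rip, of X]
      psd_trace_pos[OF psd] by (simp add: \<kappa>_def)
  ultimately obtain w where "w \<noteq> 0" "?h (outer w w) \<le> 0"
    using psd_outer_witness[OF psd] by blast
  then show ?thesis by (auto simp: trace_outer)
qed

lemma meas_loss_hess_eigenvalue_le:
  fixes A :: "'m::finite \<Rightarrow> real^'n^'n" and X :: "real^'r^'n"
  assumes rip: "RIP A (CARD('r) + rank M) \<delta>" and "0 \<le> \<delta>" and psd: "psd M" "M \<noteq> 0"
    and crit: "grad (meas_loss A M) X = 0"
  defines "\<kappa> \<equiv> (1 - \<delta>) * (norm (X ** transpose X - M))\<^sup>2 / trace M"
  shows "\<exists>\<mu>. hess_eigenvalue (meas_loss A M) X \<mu> \<and> \<mu> \<le> 2 * (2 * (1 + \<delta>) * (sigma_r X)\<^sup>2 - \<kappa>)"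
proof -
  obtain w where "w \<noteq> 0" and descent: "residual A M X \<bullet> meas A (outer w w) + \<kappa> * (w \<bullet> w) \<le> 0"
    using critical_outer_descent[OF rip psd crit] unfolding \<kappa>_def by blast
  obtain q where q: "norm q = 1" "(norm (X *v q))\<^sup>2 = (sigma_r X)\<^sup>2"
    using sigma_r_attained by blast
  have "0 < CARD('r)" "rank M \<noteq> 0"
    using rank_eq_0[of M] \<open>M \<noteq> 0\<close> by simp_all
  then have "2 \<le> CARD('r) + rank M" by linarith
  then have "(norm (meas A (outer (X *v q) w + outer w (X *v q))))\<^sup>2
      \<le> 4 * (1 + \<delta>) * (sigma_r X)\<^sup>2 * (w \<bullet> w)"
    using rip_sym_outer_le[OF rip _ \<open>0 \<le> \<delta>\<close>, of "X *v q" w] q(2) by (simp add: power2_norm_eq_inner)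
  then have hess_U: "meas_loss_hess A M X (outer w q) (outer w q)
      \<le> 2 * (2 * (1 + \<delta>) * (sigma_r X)\<^sup>2 - \<kappa>) * (w \<bullet> w)"
    using descent unfolding meas_loss_hess_outer[OF q(1)] by (simp add: algebra_simps)
  obtain \<mu> where eig: "hess_eigenvalue (meas_loss A M) X \<mu>"
      and rayleigh: "\<forall>U. \<mu> * (norm U)\<^sup>2 \<le> meas_loss_hess A M X U U"
    using hess_min_eigenvalue_bilinear[OF bilinear_meas_loss_hess meas_loss_hess_commute d2_meas_loss] by blast
  have "\<mu> * (w \<bullet> w) \<le> 2 * (2 * (1 + \<delta>) * (sigma_r X)\<^sup>2 - \<kappa>) * (w \<bullet> w)"
    using rayleigh[rule_format, of "outer w q"] hess_U q(1) by (simp add: norm_outer power2_norm_eq_inner)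
  then show ?thesis using eig \<open>w \<noteq> 0\<close> by auto
qed

theorem theorem1:
  fixes A :: "'m::finite \<Rightarrow> real^'n::finite^'n"
    and Mstar :: "real^'n^'n"
    and Xh :: "real^'r::finite^'n"
    and rs :: nat and \<delta> :: real
    and f :: "real^'r^'n \<Rightarrow> real"
  assumes dims: "CARD('r) \<le> CARD('n)" "rs \<le> CARD('r)" "1 \<le> rs"
    and symA: "\<And>k. transpose (A k) = A k"
    and Mpsd: "psd Mstar" and Mnz: "Mstar \<noteq> 0" and Mrank: "rank Mstar = rs"
    and f_def: "\<And>X. f X = (1/2) * (norm (meas A (X ** transpose X) - meas A Mstar))\<^sup>2"
    and delta: "0 \<le> \<delta>" "\<delta> < 1"
    and rip: "RIP A (CARD('r) + rs) \<delta>"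
    and crit: "first_order_critical f Xh"
    and gap: "(frob_norm (Xh ** transpose Xh - Mstar))\<^sup>2
              > 2 * ((1 + \<delta>) / (1 - \<delta>)) * trace Mstar * (sigma_r Xh)\<^sup>2"
  shows "\<not> second_order_critical f Xh \<and> strict_saddle f Xh \<and>
         (\<exists>l. hess_eigenvalue f Xh l \<and> l < 0 \<and>
              l \<le> 2 * (1 + \<delta>) * (sigma_r Xh)\<^sup>2
                   - (1 - \<delta>) * (frob_norm (Xh ** transpose Xh - Mstar))\<^sup>2 / trace Mstar)"
proof -
  have f: "f = meas_loss A Mstar"
    by (rule ext) (simp add: f_def meas_loss_def residual_def meas_diff)
  define bound where "bound = 2 * (1 + \<delta>) * (sigma_r Xh)\<^sup>2
      - (1 - \<delta>) * (frob_norm (Xh ** transpose Xh - Mstar))\<^sup>2 / trace Mstar"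
  obtain \<mu> where eig: "hess_eigenvalue f Xh \<mu>" and "\<mu> \<le> 2 * bound"
    using meas_loss_hess_eigenvalue_le[of A Mstar \<delta> Xh] rip Mrank delta(1) Mpsd Mnz crit
    unfolding f first_order_critical_def bound_def frob_norm_eq_norm by blast
  moreover have "bound < 0"
    using gap delta psd_trace_pos[OF Mpsd Mnz] by (simp add: bound_def field_simps)
  ultimately have "\<mu> < 0" "\<mu> \<le> bound" by linarith+
  then show ?thesis
    using eig crit not_second_order_critical_if_neg_eigenvalue[OF eig]
    unfolding strict_saddle_def bound_def by blast
qed

end
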